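(* Let $\Lambda=\{\lambda_i\}_{i\geq 0}$ be a nontrivial numerical semigroup (i.e. $\Lambda\neq\mathbb{N}_0$) with $\lambda_0=0<\lambda_1<\cdots$ and conductor $c=\lambda_k$. Let $\lambda_s$ be an order-zero seed of $\Lambda$, let $\tilde\Lambda=\Lambda\setminus\{\lambda_s\}$, and set $\tilde s=s-k$ (so $0\le\tilde s<\lambda_1$ and $\lambda_s=c+\tilde s$). Let $S(\Lambda)=S_0S_1S_2\cdots$ be the seed string of $\Lambda$, and define the binary string $\tilde S=\tilde S_0\tilde S_1\cdots$ by $\tilde S_\ell=0$ if $\ell=\lambda_i+j$ for some $1\leq i<k$ and $0\leq j<\min(\tilde s,\lambda_{i+1}-\lambda_i)$, and $\tilde S_\ell=S_\ell$ otherwise. Then the seed string of $\tilde\Lambda$, which has conductor $c+\tilde s+1$, is $$S(\tilde\Lambda)=\tilde S_{\tilde s+1}\,\tilde S_{\tilde s+2}\cdots\tilde S_{c-1}\,\underbrace{0\cdots0\,1}_{2\tilde s}\,1\,1$$ (followed by zeros), where the underbraced block consists of $2\tilde s$ bits, namely $2\tilde s-1$ zeros followed by a one (and is empty when $\tilde s=0$). In particular, $S(\tilde\Lambda)=S_1\cdots S_{c-1}\,1\,1$ whenever $\tilde s=0$.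
   Context: A numerical semigroup is a subset $\Lambda\subseteq\mathbb{N}_0$ containing $0$, closed under addition, with finite complement; the elements of $\mathbb{N}_0\setminus\Lambda$ are gaps and their number $g$ is the genus. The elements are enumerated increasingly $\lambda_0=0<\lambda_1<\cdots$; $k$ is the smallest index such that $\lambda_i=i+g$ for all $i\geq k$, and the conductor is $c=\lambda_k$. A generator of a numerical semigroup is a nonzero element not expressible as a sum of two nonzero elements of the semigroup. For a numerical semigroup $\Gamma=\{\gamma_i\}_{i\ge0}$ (increasing enumeration) with conductor $c_\Gamma=\gamma_{k'}$, let $\Gamma_i=\Gamma\setminus\{\gamma_1,\dots,\gamma_i\}$; an element $\gamma_t$ with $t\geq k'$ is an order-$i$ seed of $\Gamma$ ($0\le i<k'$) if $\gamma_t+\gamma_i$ is a generator of $\Gamma_i$; order-zero seeds are the generators $\ge c_\Gamma$. The seed string $S(\Gamma)=S_0S_1S_2\cdots$ is the binary string defined, for $0\le i<k'$ and $0\le j<\gamma_{i+1}-\gamma_i$, by $S_{\gamma_i+j}=1$ if $c_\Gamma+j$ is an order-$i$ seed of $\Gamma$ and $S_{\gamma_i+j}=0$ otherwise, and $S_\ell=0$ for $\ell\ge c_\Gamma$ (so it is identified with its first $c_\Gamma$ bits). Here $\tilde\Lambda=\Lambda\setminus\{\lambda_s\}$ is again a numerical semigroup. *)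

theory Defs
  imports "HOL-Library.Infinite_Set"
begin

definition numerical_semigroup :: "nat set \<Rightarrow> bool" where
  "numerical_semigroup L \<longleftrightarrow> 0 \<in> L \<and> (\<forall>a\<in>L. \<forall>b\<in>L. a + b \<in> L) \<and> finite (UNIV - L)"

definition elem :: "nat set \<Rightarrow> nat \<Rightarrow> nat" where
  "elem L i = enumerate L i"

definition genus :: "nat set \<Rightarrow> nat" where
  "genus L = card (UNIV - L)"

definition cond_index :: "nat set \<Rightarrow> nat" where
  "cond_index L = (LEAST k. \<forall>i\<ge>k. elem L i = i + genus L)"

definition conductor :: "nat set \<Rightarrow> nat" where
  "conductor L = elem L (cond_index L)"

definition generator :: "nat set \<Rightarrow> nat \<Rightarrow> bool" where
  "generator L x \<longleftrightarrow> x \<in> L \<and> x \<noteq> 0 \<and>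
     \<not> (\<exists>a\<in>L. \<exists>b\<in>L. a \<noteq> 0 \<and> b \<noteq> 0 \<and> x = a + b)"

definition remove_first :: "nat set \<Rightarrow> nat \<Rightarrow> nat set" where
  "remove_first L i = L - elem L ` {1..i}"

definition order_seed :: "nat set \<Rightarrow> nat \<Rightarrow> nat \<Rightarrow> bool" where
  "order_seed L i x \<longleftrightarrow> i < cond_index L \<and>
     (\<exists>t\<ge>cond_index L. x = elem L t) \<and> generator (remove_first L i) (x + elem L i)"

text \<open>seed string; True encodes bit 1, False bit 0\<close>
definition seed_string :: "nat set \<Rightarrow> nat \<Rightarrow> bool" where
  "seed_string L l \<longleftrightarrow> (\<exists>i < cond_index L. \<exists>j. j < elem L (Suc i) - elem L i \<and>
       l = elem L i + j \<and> order_seed L i (conductor L + j))"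

end

theory Submission
  imports Defs
begin

text \<open>Bit l of the seed string of G is set exactly when l lies below the conductor c and
c + l is not a sum of two elements of G exceeding l: for l in the block starting at \<lambda>_i, the
nonzero elements of G_i are the elements of G above \<lambda>_i, i.e. those above l.
Removing a generator x = c + st \<ge> c makes x + 1 the new conductor, so bit p of the new string
asks about x + 1 + p = c + q with q = st + 1 + p. For q < c, a decomposition in G - {x} into
parts above p either has both parts above q (bit q of the old string), or has a part a \<le> q;
then a \<noteq> p + 1, since the other part would be x, so 0 < a \<le> q < a + st, which is exactly
where the old string gets masked. For q \<ge> c the only obstructions are the sums involving x.\<close>

definition sum_of_two_above :: "nat set \<Rightarrow> nat \<Rightarrow> nat \<Rightarrow> bool" where
  "sum_of_two_above G l n \<longleftrightarrow> (\<exists>a\<in>G. \<exists>b\<in>G. l < a \<and> l < b \<and> n = a + b)"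

lemma numerical_semigroup_infinite:
  assumes "numerical_semigroup G"
  shows "infinite G"
proof
  assume "finite G"
  with assms have "finite (G \<union> (UNIV - G))"
    unfolding numerical_semigroup_def by blast
  then show False by simp
qed

lemma numerical_semigroup_obtain_tail:
  assumes "numerical_semigroup G"
  obtains c where "\<And>n. c \<le> n \<Longrightarrow> n \<in> G" and "0 < c \<Longrightarrow> c - 1 \<notin> G"
proof -
  have "finite (UNIV - G)"
    using assms unfolding numerical_semigroup_def by blast
  then obtain k where "UNIV - G \<subseteq> {..<k}"
    using finite_nat_iff_bounded by blast
  then have "\<forall>n\<ge>k. n \<in> G"
    by auto
  then have ex: "\<exists>c. \<forall>n\<ge>c. n \<in> G"
    by blast
  define c where "c = (LEAST c. \<forall>n\<ge>c. n \<in> G)"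
  have tail: "\<forall>n\<ge>c. n \<in> G"
    unfolding c_def by (rule LeastI_ex[OF ex])
  have gap: "c - 1 \<notin> G" if "0 < c"
  proof
    assume "c - 1 \<in> G"
    have "\<forall>n\<ge>c - 1. n \<in> G"
    proof (intro allI impI)
      fix n assume "c - 1 \<le> n"
      then consider "n = c - 1" | "c \<le> n" by linarith
      then show "n \<in> G" using tail \<open>c - 1 \<in> G\<close> by cases auto
    qed
    then have "c \<le> c - 1"
      unfolding c_def by (rule Least_le)
    with that show False by simp
  qed
  show ?thesis
    using tail gap by (intro that) auto
qed

context
  fixes G :: "nat set"
  assumes ns: "numerical_semigroup G"
begin

lemma elem_0: "elem G 0 = 0"
  using ns unfolding elem_def numerical_semigroup_def by (simp add: enumerate_0 Least_eq_0)

lemma elem_in: "elem G i \<in> G"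
  unfolding elem_def by (rule enumerate_in_set[OF numerical_semigroup_infinite[OF ns]])

lemma elem_less_iff [simp]: "elem G m < elem G n \<longleftrightarrow> m < n"
  unfolding elem_def using numerical_semigroup_infinite[OF ns] by simp

lemma elem_le_iff [simp]: "elem G m \<le> elem G n \<longleftrightarrow> m \<le> n"
  unfolding elem_def using numerical_semigroup_infinite[OF ns] by simp

lemma inj_elem: "inj (elem G)"
  unfolding elem_def by (rule inj_enumerate[OF numerical_semigroup_infinite[OF ns]])

lemma ex_elem_eq: "a \<in> G \<Longrightarrow> \<exists>m. elem G m = a"
  unfolding elem_def by (rule enumerate_Ex[OF numerical_semigroup_infinite[OF ns]])

lemma le_elem: "n \<le> elem G n"
  unfolding elem_def by (rule le_enumerate[OF numerical_semigroup_infinite[OF ns]])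

lemma elem_Suc_le:
  assumes "a \<in> G" "elem G i < a"
  shows "elem G (Suc i) \<le> a"
proof -
  obtain m where m: "elem G m = a"
    using ex_elem_eq assms(1) by blast
  with assms(2) have "elem G i < elem G m"
    by simp
  then have "Suc i \<le> m"
    by (simp add: Suc_le_eq)
  with m show ?thesis
    by (metis elem_le_iff)
qed

lemma ex_elem_bracket: "\<exists>i. elem G i \<le> l \<and> l < elem G (Suc i)"
proof -
  have "l < elem G (Suc l)" "\<not> l < elem G 0"
    using le_elem[of "Suc l"] elem_0 by auto
  then obtain k where "\<forall>i\<le>k. \<not> l < elem G i" "l < elem G (Suc k)"
    using ex_least_nat_less[of "\<lambda>m. l < elem G m" "Suc l"] by blast
  then have "elem G k \<le> l" "l < elem G (Suc k)"
    by (simp_all add: not_less)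
  then show ?thesis by blast
qed

lemma conductor_of_tail:
  assumes tail: "\<And>n. c \<le> n \<Longrightarrow> n \<in> G" and gap: "0 < c \<Longrightarrow> c - 1 \<notin> G"
  shows "conductor G = c" and "elem G (cond_index G + j) = c + j"
proof -
  obtain m where m: "elem G m = c"
    using ex_elem_eq tail by blast
  have shift: "elem G (m + j) = c + j" for j
  proof (induction j)
    case (Suc j)
    have "elem G (m + Suc j) = (LEAST a. a \<in> G \<and> c + j < a)"
      using Suc enumerate_Suc''[OF numerical_semigroup_infinite[OF ns]] unfolding elem_def by simp
    also have "\<dots> = c + Suc j"
      by (rule Least_equality) (auto intro: tail)
    finally show ?case .
  qed (simp add: m)
  have "G \<inter> {..<c} = elem G ` {..<m}"
  proof (intro equalityI subsetI)
    fix a assume "a \<in> G \<inter> {..<c}"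
    then obtain i where "elem G i = a" "i < m"
      using ex_elem_eq m by (metis IntD1 IntD2 elem_less_iff lessThan_iff)
    then show "a \<in> elem G ` {..<m}" by blast
  qed (use m elem_in in auto)
  then have "card (G \<inter> {..<c}) = m"
    using inj_elem by (simp add: card_image inj_on_subset)
  moreover have "UNIV - G = {..<c} - G"
    using tail by (auto simp: not_less[symmetric])
  ultimately have genus: "genus G = c - m"
    unfolding genus_def by (simp add: card_Diff_subset_Int Int_commute)
  have "m \<le> c"
    using le_elem[of m] m by simp
  have "cond_index G = m"
    unfolding cond_index_def
  proof (rule Least_equality)
    show "\<forall>i\<ge>m. elem G i = i + genus G"
      using shift genus \<open>m \<le> c\<close> by (metis add.commute le_add_diff_inverse2 Nat.add_diff_assoc2)
  next
    fix y assume y: "\<forall>i\<ge>y. elem G i = i + genus G"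
    show "m \<le> y"
    proof (rule ccontr)
      assume "\<not> m \<le> y"
      then have "elem G (m - 1) = c - 1" "0 < c"
        using y genus \<open>m \<le> c\<close> by auto
      then show False
        using gap elem_in by metis
    qed
  qed
  then show "conductor G = c" and "elem G (cond_index G + j) = c + j"
    unfolding conductor_def by (simp_all add: m shift)
qed

lemma conductor_le_imp_in: "conductor G \<le> n \<Longrightarrow> n \<in> G"
  by (metis conductor_of_tail(1) numerical_semigroup_obtain_tail[OF ns])

lemma elem_cond_index_add: "elem G (cond_index G + j) = conductor G + j"
  by (metis conductor_of_tail numerical_semigroup_obtain_tail[OF ns])

lemma mem_remove_first_nonzero_iff:
  "y \<in> remove_first G i \<and> y \<noteq> 0 \<longleftrightarrow> y \<in> G \<and> elem G i < y"
proof (cases "y \<in> G")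
  case True
  then obtain m where y: "y = elem G m"
    using ex_elem_eq by metis
  have "y \<in> elem G ` {1..i} \<longleftrightarrow> m \<in> {1..i}"
    unfolding y using inj_elem by (simp add: inj_image_mem_iff)
  moreover have "y \<noteq> 0 \<longleftrightarrow> 0 < m"
    using elem_less_iff[of 0 m] unfolding y elem_0 by linarith
  ultimately show ?thesis
    unfolding remove_first_def using True y by auto
qed (simp add: remove_first_def)

lemma generator_remove_first_iff:
  "generator (remove_first G i) z \<longleftrightarrow>
     z \<in> G \<and> elem G i < z \<and> \<not> sum_of_two_above G (elem G i) z"
  unfolding generator_def sum_of_two_above_def using mem_remove_first_nonzero_iff by blast

lemma seed_string_iff:
  "seed_string G l \<longleftrightarrow> l < conductor G \<and> \<not> sum_of_two_above G l (conductor G + l)"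
proof
  assume "seed_string G l"
  then obtain i j where i: "i < cond_index G" and j: "j < elem G (Suc i) - elem G i"
    and l: "l = elem G i + j" and seed: "order_seed G i (conductor G + j)"
    unfolding seed_string_def by blast
  have "elem G (Suc i) \<le> conductor G"
    using i unfolding conductor_def by simp
  then have "l < conductor G"
    using j l by linarith
  moreover have "\<not> sum_of_two_above G l (conductor G + l)"
  proof
    assume "sum_of_two_above G l (conductor G + l)"
    then obtain a b where "a \<in> G" "b \<in> G" "l < a" "l < b" "conductor G + l = a + b"
      unfolding sum_of_two_above_def by blast
    then have "sum_of_two_above G (elem G i) (conductor G + j + elem G i)"
      unfolding sum_of_two_above_def
      by (intro bexI[of _ a] bexI[of _ b]) (use l in auto)
    then show False
      using seed unfolding order_seed_def generator_remove_first_iff by blast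
  qed
  ultimately show "l < conductor G \<and> \<not> sum_of_two_above G l (conductor G + l)" ..
next
  assume l: "l < conductor G \<and> \<not> sum_of_two_above G l (conductor G + l)"
  obtain i where i: "elem G i \<le> l" "l < elem G (Suc i)"
    using ex_elem_bracket by blast
  have "i < cond_index G"
    using i l elem_le_iff[of "cond_index G" i] unfolding conductor_def by linarith
  define j where "j = l - elem G i"
  have j: "j < elem G (Suc i) - elem G i" "l = elem G i + j"
    using i unfolding j_def by auto
  have "\<not> sum_of_two_above G (elem G i) (conductor G + j + elem G i)"
  proof
    assume "sum_of_two_above G (elem G i) (conductor G + j + elem G i)"
    then obtain a b where ab: "a \<in> G" "b \<in> G" "elem G i < a" "elem G i < b"
      and sum: "conductor G + j + elem G i = a + b"
      unfolding sum_of_two_above_def by blast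
    have "l < a" "l < b"
      using ab elem_Suc_le[of a i] elem_Suc_le[of b i] i by auto
    moreover have "conductor G + l = a + b"
      using sum i(1) unfolding j_def by simp
    ultimately have "sum_of_two_above G l (conductor G + l)"
      using ab unfolding sum_of_two_above_def by blast
    with l show False by blast
  qed
  then have "generator (remove_first G i) (conductor G + j + elem G i)"
    unfolding generator_remove_first_iff using l by (auto intro: conductor_le_imp_in)
  then have "order_seed G i (conductor G + j)"
    unfolding order_seed_def using \<open>i < cond_index G\<close> elem_cond_index_add[of j]
    by (metis le_add1)
  then show "seed_string G l"
    unfolding seed_string_def using \<open>i < cond_index G\<close> j by blast
qed

end

lemma numerical_semigroup_remove_generator:
  assumes ns: "numerical_semigroup G" and gen: "generator G x"
  shows "numerical_semigroup (G - {x})"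
  unfolding numerical_semigroup_def
proof (intro conjI ballI)
  show "0 \<in> G - {x}"
    using ns gen unfolding numerical_semigroup_def generator_def by simp
  show "a + b \<in> G - {x}" if "a \<in> G - {x}" "b \<in> G - {x}" for a b
  proof -
    have "a + b \<in> G"
      using that ns unfolding numerical_semigroup_def by blast
    moreover have "a + b \<noteq> x"
      using that gen unfolding generator_def by (cases "a = 0 \<or> b = 0") auto
    ultimately show ?thesis by blast
  qed
  have "UNIV - (G - {x}) = insert x (UNIV - G)"
    using gen unfolding generator_def by auto
  then show "finite (UNIV - (G - {x}))"
    using ns unfolding numerical_semigroup_def by simp
qed

lemma conductor_remove_generator:
  assumes ns: "numerical_semigroup G" and gen: "generator G x" and "conductor G \<le> x"
  shows "conductor (G - {x}) = x + 1"
proof (rule conductor_of_tail(1)[OF numerical_semigroup_remove_generator[OF ns gen]])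
  show "n \<in> G - {x}" if "x + 1 \<le> n" for n
    using that assms(3) conductor_le_imp_in[OF ns, of n] by simp
qed simp

lemma seed_string_remove_generator_iff:
  assumes ns: "numerical_semigroup G" and gen: "generator G x" and "conductor G \<le> x"
  shows "seed_string (G - {x}) p \<longleftrightarrow> p < x + 1 \<and> \<not> sum_of_two_above (G - {x}) p (x + 1 + p)"
  using seed_string_iff[OF numerical_semigroup_remove_generator[OF ns gen]]
    conductor_remove_generator[OF assms] by simp

lemma block_prefix_iff_near_elem:
  assumes ns: "numerical_semigroup G" and "q < conductor G"
  shows "(\<exists>i j. 1 \<le> i \<and> i < cond_index G \<and> j < min d (elem G (Suc i) - elem G i) \<and> q = elem G i + j)
    \<longleftrightarrow> (\<exists>a\<in>G. 0 < a \<and> a \<le> q \<and> q < a + d)"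
proof
  assume "\<exists>i j. 1 \<le> i \<and> i < cond_index G \<and> j < min d (elem G (Suc i) - elem G i) \<and> q = elem G i + j"
  then obtain i j where "1 \<le> i" "j < d" "q = elem G i + j"
    by auto
  moreover have "0 < elem G i" if "1 \<le> i" for i
    using that elem_less_iff[OF ns, of 0 i] unfolding elem_0[OF ns] by simp
  ultimately show "\<exists>a\<in>G. 0 < a \<and> a \<le> q \<and> q < a + d"
    using elem_in[OF ns] by (intro bexI[of _ "elem G i"]) auto
next
  assume "\<exists>a\<in>G. 0 < a \<and> a \<le> q \<and> q < a + d"
  then obtain a where a: "a \<in> G" "0 < a" "a \<le> q" "q < a + d"
    by blast
  obtain m where m: "elem G m = a"
    using ex_elem_eq[OF ns a(1)] by blast
  obtain i where i: "elem G i \<le> q" "q < elem G (Suc i)"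
    using ex_elem_bracket[OF ns] by blast
  have "m \<le> i"
    using a i m elem_le_iff[OF ns, of "Suc i" m] by linarith
  moreover have "1 \<le> m"
    using a m elem_0[OF ns] by (cases m) auto
  ultimately have "1 \<le> i"
    by simp
  moreover have "i < cond_index G"
    using i assms(2) elem_le_iff[OF ns, of "cond_index G" i] unfolding conductor_def by linarith
  moreover have "q - elem G i < min d (elem G (Suc i) - elem G i)"
  proof -
    have "a \<le> elem G i"
      using \<open>m \<le> i\<close> m elem_le_iff[OF ns] by blast
    with a i show ?thesis by linarith
  qed
  moreover have "q = elem G i + (q - elem G i)"
    using i by simp
  ultimately show "\<exists>i j. 1 \<le> i \<and> i < cond_index G \<and> j < min d (elem G (Suc i) - elem G i) \<and> q = elem G i + j"
    by blast
qed

lemma seed_string_remove_generator_below: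
  assumes ns: "numerical_semigroup G" and gen: "generator G (conductor G + d)"
    and below: "d + 1 + p < conductor G"
  shows "seed_string (G - {conductor G + d}) p \<longleftrightarrow>
    \<not> (\<exists>a\<in>G. 0 < a \<and> a \<le> d + 1 + p \<and> d + 1 + p < a + d) \<and> seed_string G (d + 1 + p)"
proof -
  define c where "c = conductor G"
  define x where "x = c + d"
  define q where "q = d + 1 + p"
  have tail: "n \<in> G" if "c \<le> n" for n
    using that conductor_le_imp_in[OF ns] unfolding c_def by blast
  have "sum_of_two_above (G - {x}) p (c + q) \<longleftrightarrow>
    (\<exists>a\<in>G. 0 < a \<and> a \<le> q \<and> q < a + d) \<or> sum_of_two_above G q (c + q)"
  proof
    assume "sum_of_two_above (G - {x}) p (c + q)"
    then obtain a b where ab: "a \<in> G" "b \<in> G" "a \<noteq> x" "b \<noteq> x" "p < a" "p < b" "c + q = a + b"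
      unfolding sum_of_two_above_def by blast
    consider "q < a" "q < b" | "a \<le> q" | "b \<le> q"
      by linarith
    then show "(\<exists>a\<in>G. 0 < a \<and> a \<le> q \<and> q < a + d) \<or> sum_of_two_above G q (c + q)"
    proof cases
      case 1
      then show ?thesis
        using ab unfolding sum_of_two_above_def by blast
    next
      case 2
      \<comment> \<open>a = p + 1 would force b = x\<close>
      with ab have "0 < a" "q < a + d"
        unfolding x_def q_def by auto
      with 2 ab(1) show ?thesis by blast
    next
      case 3
      with ab have "0 < b" "q < b + d"
        unfolding x_def q_def by auto
      with 3 ab(2) show ?thesis by blast
    qed
  next
    assume "(\<exists>a\<in>G. 0 < a \<and> a \<le> q \<and> q < a + d) \<or> sum_of_two_above G q (c + q)"
    then show "sum_of_two_above (G - {x}) p (c + q)"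
    proof
      assume "\<exists>a\<in>G. 0 < a \<and> a \<le> q \<and> q < a + d"
      then obtain a where a: "a \<in> G" "0 < a" "a \<le> q" "q < a + d"
        by blast
      have "c + q - a \<in> G"
        using a(3) by (intro tail) simp
      moreover have "a \<noteq> x" "c + q - a \<noteq> x" "p < a" "p < c + q - a"
        using a below unfolding x_def q_def c_def by auto
      ultimately show ?thesis
        using a unfolding sum_of_two_above_def
        by (intro bexI[of _ a] bexI[of _ "c + q - a"]) auto
    next
      assume "sum_of_two_above G q (c + q)"
      then obtain a b where "a \<in> G" "b \<in> G" "q < a" "q < b" "c + q = a + b"
        unfolding sum_of_two_above_def by blast
      moreover have "a \<noteq> x" "b \<noteq> x"
        using calculation unfolding x_def by auto
      ultimately show ?thesis
        unfolding sum_of_two_above_def q_def by (intro bexI[of _ a] bexI[of _ b]) auto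
    qed
  qed
  moreover have "seed_string (G - {x}) p \<longleftrightarrow> \<not> sum_of_two_above (G - {x}) p (c + q)"
  proof -
    have "x + 1 + p = c + q" "p < x + 1"
      using below unfolding x_def q_def c_def by simp_all
    moreover have "generator G x" "conductor G \<le> x"
      using gen unfolding x_def c_def by simp_all
    ultimately show ?thesis
      using seed_string_remove_generator_iff[OF ns] by simp
  qed
  moreover have "seed_string G q \<longleftrightarrow> \<not> sum_of_two_above G q (c + q)"
    using seed_string_iff[OF ns] below unfolding c_def q_def by simp
  ultimately have "seed_string (G - {x}) p \<longleftrightarrow>
      \<not> (\<exists>a\<in>G. 0 < a \<and> a \<le> q \<and> q < a + d) \<and> seed_string G q"
    by blast
  then show ?thesis
    unfolding x_def c_def q_def .
qed

lemma seed_string_remove_generator_above: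
  assumes ns: "numerical_semigroup G" and gen: "generator G (conductor G + d)"
    and above: "conductor G \<le> d + 1 + p"
  shows "seed_string (G - {conductor G + d}) p \<longleftrightarrow>
    p + 2 = conductor G + d \<or> p + 1 = conductor G + d \<or> p = conductor G + d"
proof -
  define c where "c = conductor G"
  define x where "x = c + d"
  have seed: "seed_string (G - {x}) p \<longleftrightarrow> p < x + 1 \<and> \<not> sum_of_two_above (G - {x}) p (x + 1 + p)"
    using seed_string_remove_generator_iff[OF ns gen] unfolding x_def c_def by simp
  show ?thesis
  proof (cases "p + 2 < x")
    case True
    define a where "a = max c (p + 2)"
    have "a \<in> G" "x + 1 + p - a \<in> G"
      using True above conductor_le_imp_in[OF ns] unfolding a_def x_def c_def by simp_all
    moreover have "a \<noteq> x" "x + 1 + p - a \<noteq> x" "p < a" "p < x + 1 + p - a"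
      using True above unfolding a_def x_def c_def by auto
    ultimately have "sum_of_two_above (G - {x}) p (x + 1 + p)"
      unfolding sum_of_two_above_def using True
      by (intro bexI[of _ a] bexI[of _ "x + 1 + p - a"]) (auto simp: a_def)
    with True seed show ?thesis
      unfolding x_def c_def by auto
  next
    case False
    \<comment> \<open>parts above p summing to x + 1 + p \<le> 2 p + 3 must include x\<close>
    have "\<not> sum_of_two_above (G - {x}) p (x + 1 + p)"
    proof
      assume "sum_of_two_above (G - {x}) p (x + 1 + p)"
      then obtain a b where "a \<noteq> x" "b \<noteq> x" "p < a" "p < b" "x + 1 + p = a + b"
        unfolding sum_of_two_above_def by blast
      with False show False by linarith
    qed
    with False seed show ?thesis
      unfolding x_def c_def by auto
  qed
qed

theorem lemma4:
  fixes L :: "nat set" and s :: nat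
  assumes "numerical_semigroup L"
    and "L \<noteq> UNIV"
    and "order_seed L 0 (elem L s)"
    and "s \<ge> cond_index L"
  shows "conductor (L - {elem L s}) = conductor L + (s - cond_index L) + 1 \<and>
    (let k = cond_index L; c = conductor L; st = s - k; S = seed_string L;
         St = (\<lambda>l. if (\<exists>i j. 1 \<le> i \<and> i < k \<and> j < min st (elem L (Suc i) - elem L i)
                                \<and> l = elem L i + j) then False else S l)
     in seed_string (L - {elem L s}) =
        (\<lambda>p. if p + st + 1 < c then St (st + 1 + p)
             else if p + 1 < c + st then p + 2 = c + st
             else p + 1 = c + st \<or> p = c + st))"
proof -
  note ns = assms(1)
  define st where "st = s - cond_index L"
  have x: "elem L s = conductor L + st"
    using elem_cond_index_add[OF ns, of st] assms(4) unfolding st_def by simp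
  have gen: "generator L (conductor L + st)"
    using assms(3) x elem_0[OF ns] unfolding order_seed_def remove_first_def by simp
  have "seed_string (L - {conductor L + st}) p =
    (if p + st + 1 < conductor L then
       (if \<exists>i j. 1 \<le> i \<and> i < cond_index L \<and> j < min st (elem L (Suc i) - elem L i)
                \<and> st + 1 + p = elem L i + j
        then False else seed_string L (st + 1 + p))
     else if p + 1 < conductor L + st then p + 2 = conductor L + st
     else p + 1 = conductor L + st \<or> p = conductor L + st)" for p
  proof (cases "p + st + 1 < conductor L")
    case True
    then show ?thesis
      using seed_string_remove_generator_below[OF ns gen, of p]
        block_prefix_iff_near_elem[OF ns, of "st + 1 + p" st] by auto
  next
    case False
    then show ?thesis
      using seed_string_remove_generator_above[OF ns gen, of p] by auto
  qed
  then show ?thesis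
    using conductor_remove_generator[OF ns gen] unfolding Let_def st_def[symmetric] x
    by (simp add: fun_eq_iff)
qed

end
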